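(* Let $\mathbb{F}_4=\{0,1,\omega,\omega+1\}$ be the field with four elements, where $\omega^2=\omega+1$. The irreducible $\lambda$-quiddities over $\mathbb{F}_4$ are exactly, up to cyclic permutation, the following tuples: - $(1,1,1)$; - $(0,0,0,0)$, $(0,\omega,0,\omega)$, $(0,\omega+1,0,\omega+1)$; - $(\omega,\omega,\omega,\omega,\omega)$, $(\omega+1,\omega+1,\omega+1,\omega+1,\omega+1)$; - $(\omega,\omega+1,\omega,\omega+1,\omega,\omega+1)$; - $(\omega,\omega,\omega+1,\omega+1,\omega,\omega,\omega+1,\omega+1)$; - $(\omega,\omega,\omega+1,\omega,\omega,\omega+1,\omega,\omega,\omega+1)$ and $(\omega+1,\omega+1,\omega,\omega+1,\omega+1,\omega,\omega+1,\omega+1,\omega)$.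
   Context: All rings are commutative with unit. For $a_1,\ldots,a_n\in A$, $M_n(a_1,\ldots,a_n)=\begin{pmatrix}a_n&-1\\1&0\end{pmatrix}\cdots\begin{pmatrix}a_1&-1\\1&0\end{pmatrix}$. An $n$-tuple $(a_1,\ldots,a_n)\in A^n$ is a $\lambda$-quiddity over $A$ if $M_n(a_1,\ldots,a_n)=\pm\mathrm{Id}$. For $(a_1,\ldots,a_n)\in A^n$, $(b_1,\ldots,b_m)\in A^m$, define $(a_1,\ldots,a_n)\oplus(b_1,\ldots,b_m)=(a_1+b_m,a_2,\ldots,a_{n-1},a_n+b_1,b_2,\ldots,b_{m-1})$. Write $(a_1,\ldots,a_n)\sim(b_1,\ldots,b_n)$ if $(b_1,\ldots,b_n)$ is obtained from $(a_1,\ldots,a_n)$ or from $(a_n,\ldots,a_1)$ by a cyclic permutation. A $\lambda$-quiddity $(c_1,\ldots,c_n)$ with $n\ge3$ is reducible if there exist a $\lambda$-quiddity $(b_1,\ldots,b_l)$ and a tuple $(a_1,\ldots,a_m)$ with $l,m\ge3$ and $(c_1,\ldots,c_n)\sim(a_1,\ldots,a_m)\oplus(b_1,\ldots,b_l)$; it is irreducible otherwise (by convention $(0,0)$ is reducible). *)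

theory Defs
  imports Main
begin

datatype f4 = F0 | F1 | W | W1
  \<comment> \<open>F0 = 0, F1 = 1, W = \<omega>, W1 = \<omega>+1\<close>

fun f4_add :: "f4 \<Rightarrow> f4 \<Rightarrow> f4" where
  "f4_add F0 y = y"
| "f4_add x F0 = x"
| "f4_add F1 F1 = F0" | "f4_add F1 W = W1" | "f4_add F1 W1 = W"
| "f4_add W F1 = W1" | "f4_add W W = F0" | "f4_add W W1 = F1"
| "f4_add W1 F1 = W" | "f4_add W1 W = F1" | "f4_add W1 W1 = F0"

fun f4_mul :: "f4 \<Rightarrow> f4 \<Rightarrow> f4" where
  "f4_mul F0 y = F0"
| "f4_mul x F0 = F0"
| "f4_mul F1 y = y"
| "f4_mul x F1 = x"
| "f4_mul W W = W1" | "f4_mul W W1 = F1"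
| "f4_mul W1 W = F1" | "f4_mul W1 W1 = W"

fun f4_inv :: "f4 \<Rightarrow> f4" where
  "f4_inv F0 = F0" | "f4_inv F1 = F1" | "f4_inv W = W1" | "f4_inv W1 = W"

lemma f4_All: "(\<forall>x. P x) \<longleftrightarrow> P F0 \<and> P F1 \<and> P W \<and> P W1"
  by (metis f4.exhaust)

instantiation f4 :: field
begin
definition "0 = F0"
definition "1 = F1"
definition "x + y = f4_add x y"
definition "x * y = f4_mul x y"
definition "uminus x = (x :: f4)"
definition "x - y = f4_add x y"
definition "inverse x = f4_inv x"
definition "x div y = f4_mul x (f4_inv y)"
instance
  apply standard
  apply (unfold zero_f4_def one_f4_def plus_f4_def times_f4_def uminus_f4_def
      minus_f4_def inverse_f4_def divide_f4_def)
  apply (((atomize (full))?, simp add: f4_All)+)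
  done
end

definition omega :: f4 ("\<omega>") where "\<omega> = W"

lemma omega_sq: "\<omega> * \<omega> = \<omega> + 1"
  by (simp add: omega_def times_f4_def plus_f4_def one_f4_def)

type_synonym 'a mat2 = "'a \<times> 'a \<times> 'a \<times> 'a"  \<comment> \<open>(m11, m12, m21, m22)\<close>

definition mat2_mult :: "'a::comm_ring_1 mat2 \<Rightarrow> 'a mat2 \<Rightarrow> 'a mat2" where
  "mat2_mult A B = (case A of (a11,a12,a21,a22) \<Rightarrow> case B of (b11,b12,b21,b22) \<Rightarrow>
     (a11*b11 + a12*b21, a11*b12 + a12*b22, a21*b11 + a22*b21, a21*b12 + a22*b22))"

definition mat2_id :: "'a::comm_ring_1 mat2" where "mat2_id = (1, 0, 0, 1)"

definition elem_mat :: "'a::comm_ring_1 \<Rightarrow> 'a mat2" where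
  "elem_mat a = (a, -1, 1, 0)"

text \<open>M(a_1,...,a_n) = E(a_n) ... E(a_1).\<close>
fun Mq :: "'a::comm_ring_1 list \<Rightarrow> 'a mat2" where
  "Mq [] = mat2_id"
| "Mq (x # xs) = mat2_mult (Mq xs) (elem_mat x)"

definition lambda_quiddity :: "'a::comm_ring_1 list \<Rightarrow> bool" where
  "lambda_quiddity c \<longleftrightarrow> Mq c = mat2_id \<or> Mq c = (-1, 0, 0, -1)"

text \<open>(a_1..a_m) \<oplus> (b_1..b_l) = (a_1+b_l, a_2..a_{m-1}, a_m+b_1, b_2..b_{l-1})\<close>
definition qsum :: "'a::comm_ring_1 list \<Rightarrow> 'a list \<Rightarrow> 'a list" where
  "qsum a b = [a ! 0 + b ! (length b - 1)] @ take (length a - 2) (drop 1 a)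
              @ [a ! (length a - 1) + b ! 0] @ take (length b - 2) (drop 1 b)"

definition tuple_equiv :: "'a list \<Rightarrow> 'a list \<Rightarrow> bool" where
  "tuple_equiv a b \<longleftrightarrow> (\<exists>k. b = rotate k a \<or> b = rotate k (rev a))"

definition reducible :: "'a::comm_ring_1 list \<Rightarrow> bool" where
  "reducible c \<longleftrightarrow> c = [0, 0] \<or>
     (\<exists>a b. lambda_quiddity b \<and> length b \<ge> 3 \<and> length a \<ge> 3 \<and> tuple_equiv c (qsum a b))"

definition irreducible_quiddity :: "'a::comm_ring_1 list \<Rightarrow> bool" where
  "irreducible_quiddity c \<longleftrightarrow> lambda_quiddity c \<and> length c \<ge> 3 \<and> \<not> reducible c"

end

theory Submission
  imports Defs
begin

text \<open>A tuple c is reducible exactly when, up to rotation and reversal, c = u @ w with at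
least three entries in u and w nonempty such that the top-left entry of M(w) is \<plusminus>1: such a w
is the interior of a \<lambda>-quiddity x # w @ [y], and u absorbs x and y. Over F4 every word of
length 10 contains a factor of length at most 7 with top-left entry 1, so irreducible
\<lambda>-quiddities have length at most 9; the finitely many words of length at most 9 without
such short factors are then inspected one by one.\<close>

lemma mat2_mult_assoc: "mat2_mult (mat2_mult A B) C = mat2_mult A (mat2_mult B C)"
  by (cases A; cases B; cases C) (simp add: mat2_mult_def algebra_simps)

lemma mat2_mult_id: "mat2_mult A mat2_id = A" "mat2_mult mat2_id A = A"
  by (cases A; simp add: mat2_mult_def mat2_id_def)+

lemma Mq_append: "Mq (xs @ ys) = mat2_mult (Mq ys) (Mq xs)"
  by (induction xs) (simp_all add: mat2_mult_id mat2_mult_assoc)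

lemma Mq_Cons_snoc: "Mq (x # w @ [y]) = mat2_mult (elem_mat y) (mat2_mult (Mq w) (elem_mat x))"
  using Mq_append[of w "[y]"] by (simp add: mat2_mult_id mat2_mult_assoc)

lemma Mq_det: "Mq w = (p, q, r, s) \<Longrightarrow> p * s - q * r = 1"
proof (induction w arbitrary: p q r s)
  case Nil
  then show ?case by (simp add: mat2_id_def)
next
  case (Cons x w)
  obtain p' q' r' s' where "Mq w = (p', q', r', s')" by (cases "Mq w") auto
  with Cons show ?case by (auto simp: mat2_mult_def elem_mat_def algebra_simps)
qed

definition corner_unit :: "'a::comm_ring_1 list \<Rightarrow> bool" where
  "corner_unit w \<longleftrightarrow> fst (Mq w) = 1 \<or> fst (Mq w) = -1"

text \<open>The bottom-right entry of E(y) M(w) E(x) is minus the top-left entry of M(w); when the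
latter is \<plusminus>1, the determinant condition lets x and y kill the off-diagonal entries.\<close>
lemma ex_lambda_quiddity_Cons_snoc_iff:
  "(\<exists>x y. lambda_quiddity (x # w @ [y])) \<longleftrightarrow> corner_unit w"
proof -
  obtain p q r s where M: "Mq w = (p, q, r, s)" by (cases "Mq w") auto
  have det: "p * s - q * r = 1" by (rule Mq_det[OF M])
  show ?thesis
  proof
    assume "\<exists>x y. lambda_quiddity (x # w @ [y])"
    then show "corner_unit w"
      using M unfolding lambda_quiddity_def Mq_Cons_snoc
      by (auto simp: corner_unit_def mat2_mult_def elem_mat_def mat2_id_def minus_equation_iff)
  next
    assume "corner_unit w"
    then have "p = 1 \<or> p = -1" using M by (simp add: corner_unit_def)
    then show "\<exists>x y. lambda_quiddity (x # w @ [y])"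
    proof
      assume "p = 1"
      then have "lambda_quiddity ((-q) # w @ [r])"
        using M det unfolding lambda_quiddity_def Mq_Cons_snoc
        by (simp add: mat2_mult_def elem_mat_def mat2_id_def algebra_simps)
      then show ?thesis by blast
    next
      assume "p = -1"
      then have "lambda_quiddity (q # w @ [-r])"
        using M det unfolding lambda_quiddity_def Mq_Cons_snoc
        by (simp add: mat2_mult_def elem_mat_def mat2_id_def algebra_simps)
      then show ?thesis by blast
    qed
  qed
qed

lemma qsum_Cons_snoc:
  "qsum (a0 # A @ [am]) (b0 # w @ [bl]) = ((a0 + bl) # A @ [am + b0]) @ w"
  by (simp add: qsum_def nth_append)

lemma Cons_snoc_of_length_ge_2:
  assumes "2 \<le> length xs"
  obtains x ys y where "xs = x # ys @ [y]" and "length ys = length xs - 2"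
proof -
  have "xs = hd xs # butlast (tl xs) @ [last (tl xs)]"
    using assms by (cases xs) (auto simp: Suc_le_length_iff)
  then show thesis
    using that by simp
qed

lemma reducible_iff_corner_unit_split:
  fixes c :: "'a::comm_ring_1 list"
  assumes "c \<noteq> [0, 0]"
  shows "reducible c \<longleftrightarrow>
    (\<exists>u w. tuple_equiv c (u @ w) \<and> 3 \<le> length u \<and> w \<noteq> [] \<and> corner_unit w)"
proof
  assume "reducible c"
  then obtain a b where b: "lambda_quiddity b" "3 \<le> length b" and a: "3 \<le> length a"
    and equiv: "tuple_equiv c (qsum a b)"
    using assms unfolding reducible_def by auto
  obtain b0 w bl where b_eq: "b = b0 # w @ [bl]" and "length w = length b - 2"
    by (rule Cons_snoc_of_length_ge_2[of b]) (use b(2) in auto)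
  obtain a0 A am where a_eq: "a = a0 # A @ [am]" and "length A = length a - 2"
    by (rule Cons_snoc_of_length_ge_2[of a]) (use a in auto)
  have "w \<noteq> []"
    using b(2) \<open>length w = length b - 2\<close> by auto
  have "corner_unit w"
    using b(1) ex_lambda_quiddity_Cons_snoc_iff unfolding b_eq by blast
  moreover have "qsum a b = ((a0 + bl) # A @ [am + b0]) @ w"
    unfolding a_eq b_eq by (rule qsum_Cons_snoc)
  ultimately show "\<exists>u w. tuple_equiv c (u @ w) \<and> 3 \<le> length u \<and> w \<noteq> [] \<and> corner_unit w"
    using equiv a \<open>w \<noteq> []\<close> unfolding a_eq
    by (intro exI[of _ "(a0 + bl) # A @ [am + b0]"] exI[of _ w]) auto
next
  assume "\<exists>u w. tuple_equiv c (u @ w) \<and> 3 \<le> length u \<and> w \<noteq> [] \<and> corner_unit w"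
  then obtain u w where equiv: "tuple_equiv c (u @ w)" and u: "3 \<le> length u"
    and "w \<noteq> []" and "corner_unit w" by blast
  then obtain x y where quid: "lambda_quiddity (x # w @ [y])"
    using ex_lambda_quiddity_Cons_snoc_iff by blast
  obtain u0 U u1 where u_eq: "u = u0 # U @ [u1]" and "length U = length u - 2"
    by (rule Cons_snoc_of_length_ge_2[of u]) (use u in auto)
  have "qsum ((u0 - y) # U @ [u1 - x]) (x # w @ [y]) = u @ w"
    unfolding qsum_Cons_snoc u_eq by simp
  moreover have "3 \<le> length ((u0 - y) # U @ [u1 - x])" "3 \<le> length (x # w @ [y])"
    using u \<open>w \<noteq> []\<close> unfolding u_eq by (auto simp: Suc_le_eq)
  ultimately show "reducible c"
    using quid equiv unfolding reducible_def by metis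
qed

definition rotations :: "'a list \<Rightarrow> 'a list list" where
  "rotations xs = map (\<lambda>k. rotate k xs) [0..<length xs]"

lemma in_set_rotations_iff:
  assumes "xs \<noteq> []"
  shows "ys \<in> set (rotations xs) \<longleftrightarrow> (\<exists>k. ys = rotate k xs)"
proof
  assume "\<exists>k. ys = rotate k xs"
  then obtain k where "ys = rotate (k mod length xs) xs"
    by (metis rotate_conv_mod)
  moreover have "k mod length xs < length xs"
    using assms by simp
  ultimately show "ys \<in> set (rotations xs)"
    unfolding rotations_def by auto
qed (auto simp: rotations_def)

lemma tuple_equiv_iff_rotations:
  assumes "xs \<noteq> []"
  shows "tuple_equiv xs ys \<longleftrightarrow> ys \<in> set (rotations xs @ rotations (rev xs))"
  using assms in_set_rotations_iff[of xs] in_set_rotations_iff[of "rev xs"]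
  unfolding tuple_equiv_def by auto

lemma ex_append_nonempty_iff_suffix:
  "(\<exists>u w. v = u @ w \<and> 3 \<le> length u \<and> w \<noteq> [] \<and> P w) \<longleftrightarrow>
    (\<exists>k\<in>set [1..<length v - 2]. P (drop (length v - k) v))"
proof
  assume "\<exists>u w. v = u @ w \<and> 3 \<le> length u \<and> w \<noteq> [] \<and> P w"
  then obtain u w where "v = u @ w" "3 \<le> length u" "w \<noteq> []" "P w" by blast
  then show "\<exists>k\<in>set [1..<length v - 2]. P (drop (length v - k) v)"
    by (intro bexI[of _ "length w"]) (simp_all add: Suc_le_eq)
next
  assume "\<exists>k\<in>set [1..<length v - 2]. P (drop (length v - k) v)"
  then obtain k where "1 \<le> k" "k + 3 \<le> length v" "P (drop (length v - k) v)" by auto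
  moreover have "v = take (length v - k) v @ drop (length v - k) v" by simp
  moreover have "3 \<le> length (take (length v - k) v)" "drop (length v - k) v \<noteq> []"
    using \<open>1 \<le> k\<close> \<open>k + 3 \<le> length v\<close> by simp_all
  ultimately show "\<exists>u w. v = u @ w \<and> 3 \<le> length u \<and> w \<noteq> [] \<and> P w"
    by blast
qed

lemma irreducible_quiddity_code:
  "irreducible_quiddity c \<longleftrightarrow> lambda_quiddity c \<and> 3 \<le> length c \<and>
    \<not> (\<exists>v\<in>set (rotations c @ rotations (rev c)).
         \<exists>k\<in>set [1..<length c - 2]. corner_unit (drop (length c - k) v))"
proof -
  let ?R = "set (rotations c @ rotations (rev c))"
  have reducible_iff: "reducible c \<longleftrightarrow>
      (\<exists>v\<in>?R. \<exists>k\<in>set [1..<length c - 2]. corner_unit (drop (length c - k) v))"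
    if "3 \<le> length c"
  proof -
    have "c \<noteq> []" "c \<noteq> [0, 0]" using that by auto
    then have "reducible c \<longleftrightarrow>
        (\<exists>v\<in>?R. \<exists>u w. v = u @ w \<and> 3 \<le> length u \<and> w \<noteq> [] \<and> corner_unit w)"
      by (simp add: reducible_iff_corner_unit_split tuple_equiv_iff_rotations) fast
    also have "\<dots> \<longleftrightarrow>
        (\<exists>v\<in>?R. \<exists>k\<in>set [1..<length c - 2]. corner_unit (drop (length c - k) v))"
      unfolding ex_append_nonempty_iff_suffix by (rule bex_cong) (auto simp: rotations_def)
    finally show ?thesis .
  qed
  then show ?thesis
    unfolding irreducible_quiddity_def
    by (intro conj_cong refl arg_cong[where f = Not] reducible_iff) assumption
qed

definition unit_factor_free :: "nat \<Rightarrow> 'a::comm_ring_1 list \<Rightarrow> bool" where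
  "unit_factor_free K v \<longleftrightarrow>
    (\<forall>i j. i < j \<longrightarrow> j \<le> length v \<longrightarrow> j - i \<le> K \<longrightarrow> \<not> corner_unit (drop i (take j v)))"

lemma unit_factor_free_take:
  "unit_factor_free K v \<Longrightarrow> K' \<le> K \<Longrightarrow> unit_factor_free K' (take m v)"
  unfolding unit_factor_free_def by (auto simp: min_def)

lemma rotate_eq_append_factor:
  assumes "i \<le> j" "j \<le> length xs"
  shows "rotate j xs = (drop j xs @ take i xs) @ drop i (take j xs)"
proof -
  have "take j xs = take i xs @ drop i (take j xs)"
    using assms(1) by (metis append_take_drop_id min.absorb1 take_take)
  moreover have "rotate j xs = drop j xs @ take j xs"
  proof (cases "j = length xs")
    case True
    then show ?thesis by simp
  next
    case False
    then show ?thesis using assms(2) by (simp add: rotate_drop_take)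
  qed
  ultimately show ?thesis by simp
qed

lemma irreducible_quiddity_unit_factor_free:
  assumes "irreducible_quiddity c"
  shows "unit_factor_free (length c - 3) c"
  unfolding unit_factor_free_def
proof (intro allI impI)
  fix i j
  assume ij: "i < j" "j \<le> length c" "j - i \<le> length c - 3"
  have "3 \<le> length c" "\<not> reducible c"
    using assms by (auto simp: irreducible_quiddity_def)
  then have "c \<noteq> [0, 0]" by auto
  let ?u = "drop j c @ take i c" and ?w = "drop i (take j c)"
  have "tuple_equiv c (?u @ ?w)"
    unfolding tuple_equiv_def using rotate_eq_append_factor[of i j c] ij by (metis less_imp_le)
  moreover have "3 \<le> length ?u" "?w \<noteq> []"
    using ij \<open>3 \<le> length c\<close> by auto
  ultimately show "\<not> corner_unit ?w"
    using \<open>\<not> reducible c\<close> reducible_iff_corner_unit_split[OF \<open>c \<noteq> [0, 0]\<close>] by blast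
qed

definition unit_suffix_free :: "nat \<Rightarrow> 'a::comm_ring_1 list \<Rightarrow> bool" where
  "unit_suffix_free K v \<longleftrightarrow>
    (\<forall>i\<in>set [0..<length v]. length v - i \<le> K \<longrightarrow> \<not> corner_unit (drop i v))"

fun unit_factor_free_words :: "nat \<Rightarrow> nat \<Rightarrow> f4 list list" where
  "unit_factor_free_words K 0 = [[]]"
| "unit_factor_free_words K (Suc n) =
    concat (map (\<lambda>w. filter (unit_suffix_free K) (map (\<lambda>x. w @ [x]) [F0, F1, W, W1]))
      (unit_factor_free_words K n))"

lemma unit_factor_free_words_complete:
  "length v = n \<Longrightarrow> unit_factor_free K v \<Longrightarrow> v \<in> set (unit_factor_free_words K n)"
proof (induction n arbitrary: v)
  case 0
  then show ?case by simp
next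
  case (Suc n)
  then obtain u x where v: "v = u @ [x]" by (cases v rule: rev_cases) auto
  have "unit_factor_free K u"
    using unit_factor_free_take[OF Suc.prems(2) order_refl, of n] Suc.prems(1) v by simp
  then have "u \<in> set (unit_factor_free_words K n)"
    using Suc v by simp
  moreover have "unit_suffix_free K v"
    using Suc.prems(2) unfolding unit_suffix_free_def unit_factor_free_def
    by (metis atLeastLessThan_iff order_refl set_upt take_all)
  moreover have "x \<in> set [F0, F1, W, W1]" by (cases x) auto
  ultimately show ?case using v by auto
qed

lemma unit_factor_free_words_7_10: "unit_factor_free_words 7 10 = []"
  by code_simp

lemma length_irreducible_quiddity_le_9:
  fixes c :: "f4 list"
  assumes "irreducible_quiddity c"
  shows "length c \<le> 9"
proof (rule ccontr)
  assume "\<not> length c \<le> 9"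
  then have "length (take 10 c) = 10" by simp
  moreover have "unit_factor_free 7 (take 10 c)"
    using irreducible_quiddity_unit_factor_free[OF assms] \<open>\<not> length c \<le> 9\<close>
    by (intro unit_factor_free_take) auto
  ultimately show False
    using unit_factor_free_words_complete unit_factor_free_words_7_10 by fastforce
qed

definition f4_irreducible_representatives :: "f4 list list" where
  "f4_irreducible_representatives =
    [[1,1,1],
     [0,0,0,0], [0,\<omega>,0,\<omega>], [0,\<omega>+1,0,\<omega>+1],
     [\<omega>,\<omega>,\<omega>,\<omega>,\<omega>], [\<omega>+1,\<omega>+1,\<omega>+1,\<omega>+1,\<omega>+1],
     [\<omega>,\<omega>+1,\<omega>,\<omega>+1,\<omega>,\<omega>+1],
     [\<omega>,\<omega>,\<omega>+1,\<omega>+1,\<omega>,\<omega>,\<omega>+1,\<omega>+1],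
     [\<omega>,\<omega>,\<omega>+1,\<omega>,\<omega>,\<omega>+1,\<omega>,\<omega>,\<omega>+1],
     [\<omega>+1,\<omega>+1,\<omega>,\<omega>+1,\<omega>+1,\<omega>,\<omega>+1,\<omega>+1,\<omega>]]"

lemma short_irreducible_quiddities_are_rotations:
  "list_all (\<lambda>n. list_all
      (\<lambda>c. irreducible_quiddity c \<longrightarrow> c \<in> set (concat (map rotations f4_irreducible_representatives)))
      (unit_factor_free_words (n - 3) n)) [3..<10]"
  unfolding irreducible_quiddity_code by code_simp

lemma f4_irreducible_representatives_irreducible:
  "list_all (\<lambda>t. list_all irreducible_quiddity (rotations t)) f4_irreducible_representatives"
  unfolding irreducible_quiddity_code by code_simp

lemma irreducible_quiddity_in_rotations:
  fixes c :: "f4 list"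
  assumes "irreducible_quiddity c"
  shows "c \<in> set (concat (map rotations f4_irreducible_representatives))"
proof -
  have "3 \<le> length c" "length c \<le> 9"
    using assms length_irreducible_quiddity_le_9 by (auto simp: irreducible_quiddity_def)
  then have "length c \<in> set [3..<10]"
    unfolding set_upt by simp
  moreover have "c \<in> set (unit_factor_free_words (length c - 3) (length c))"
    using irreducible_quiddity_unit_factor_free[OF assms]
    by (rule unit_factor_free_words_complete[OF refl])
  ultimately show ?thesis
    using short_irreducible_quiddities_are_rotations assms unfolding list_all_iff by blast
qed

theorem theorem2p7:
  fixes c :: "f4 list"
  shows "irreducible_quiddity c \<longleftrightarrow>
    (\<exists>t \<in> set [[1,1,1],
               [0,0,0,0], [0,\<omega>,0,\<omega>], [0,\<omega>+1,0,\<omega>+1],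
               [\<omega>,\<omega>,\<omega>,\<omega>,\<omega>], [\<omega>+1,\<omega>+1,\<omega>+1,\<omega>+1,\<omega>+1],
               [\<omega>,\<omega>+1,\<omega>,\<omega>+1,\<omega>,\<omega>+1],
               [\<omega>,\<omega>,\<omega>+1,\<omega>+1,\<omega>,\<omega>,\<omega>+1,\<omega>+1],
               [\<omega>,\<omega>,\<omega>+1,\<omega>,\<omega>,\<omega>+1,\<omega>,\<omega>,\<omega>+1],
               [\<omega>+1,\<omega>+1,\<omega>,\<omega>+1,\<omega>+1,\<omega>,\<omega>+1,\<omega>+1,\<omega>]].
       \<exists>k. c = rotate k t)"
proof -
  let ?R = "f4_irreducible_representatives"
  have "[] \<notin> set ?R"
    by (simp add: f4_irreducible_representatives_def)
  then have "(\<exists>t\<in>set ?R. \<exists>k. c = rotate k t) \<longleftrightarrow> (\<exists>t\<in>set ?R. c \<in> set (rotations t))"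
    by (intro bex_cong refl) (metis in_set_rotations_iff)
  also have "\<dots> \<longleftrightarrow> c \<in> set (concat (map rotations ?R))"
    by simp
  also have "\<dots> \<longleftrightarrow> irreducible_quiddity c"
    using irreducible_quiddity_in_rotations f4_irreducible_representatives_irreducible
    unfolding list_all_iff by auto
  finally show ?thesis
    unfolding f4_irreducible_representatives_def[symmetric] by (rule sym)
qed

end
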